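(* Let $\mathcal{U}(t):=2t\,\mathbb{E}\left[\log_+^2\left\{\frac{1+N_t}{t}\right\}\right]$ for $t>0$ (with $\mathcal{U}(0)=0$), where $N_t$ is a Poisson random variable with mean $t$ and $\log_+(u)=\max\{\log u,0\}$, and let $\mathcal{V}(t):=t\log^2\!\left(1+\frac{1}{\sqrt t}\right)$. Then $$\mathcal{U}(t)\le 2+\frac{2}{t}\ \text{ for all } t>0,\qquad \mathcal{U}(t)\le 2t\log^2\!\left(1+\frac1t\right)\ \text{ for all } t\in(0,e^{-1}].$$ In particular, $\mathcal{U}(t)\le 8$ and $\mathcal{U}(t)\le 21.5\,\mathcal{V}(t)$ for all $t\ge0$. *)

theory Defs
  imports "HOL-Probability.Probability"
begin

definition log_plus :: "real \<Rightarrow> real" where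
  "log_plus u = max (ln u) 0"

definition U_fun :: "real \<Rightarrow> real" where
  "U_fun t = (if t = 0 then 0 else
     2 * t * measure_pmf.expectation (poisson_pmf t)
       (\<lambda>n::nat. (log_plus ((1 + real n) / t))\<^sup>2))"

definition V_fun :: "real \<Rightarrow> real" where
  "V_fun t = t * (ln (1 + 1 / sqrt t))\<^sup>2"

end

theory Submission
  imports Defs
begin

(* Write u = (1 + N)/t.  Both bounds majorise log_+^2 u by a function alpha + beta u + gamma/u,
   whose Poisson expectation is explicit because E u = 1 + 1/t and E (1/u) = 1 - exp (-t).
   For every t, log_+^2 u <= u - 2 + 1/u (this is 2 ln x <= x - 1/x at x = sqrt u), which gives
   U(t) <= 2 - 2 t exp (-t).  For t <= 1/e all values of u lie in [e, oo), where ln^2 is concave,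
   so its tangent at the mean 1 + 1/t is a majorant: Jensen's inequality.  The comparison with V
   uses ln (1 + 1/t) <= 2 ln (1 + 1/sqrt t) for small t and V(t) >= 1/9 for t >= 1/4. *)

lemma expectation_nat_pmf_le_sums:
  fixes p :: "nat pmf" and f g :: "nat \<Rightarrow> real"
  assumes sums: "(\<lambda>n. pmf p n * g n) sums S"
    and nonneg: "\<And>n. 0 \<le> g n" and le: "\<And>n. f n \<le> g n"
  shows "measure_pmf.expectation p f \<le> S"
proof -
  have int: "integrable (count_space UNIV) (\<lambda>n. pmf p n * g n)"
    using sums nonneg unfolding integrable_count_space_nat_iff by (simp add: sums_iff abs_mult)
  then have "integrable (measure_pmf p) g"
    unfolding measure_pmf_eq_density by (subst integrable_density) auto
  then have "measure_pmf.expectation p f \<le> measure_pmf.expectation p g"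
    using nonneg le by (intro integral_mono')
  also have "\<dots> = (\<integral>n. pmf p n * g n \<partial>count_space UNIV)"
    unfolding measure_pmf_eq_density by (subst integral_density) auto
  also have "\<dots> = S"
    using int sums by (subst integral_count_space_nat) (simp_all add: sums_iff)
  finally show ?thesis .
qed

lemma pmf_poisson_Suc:
  assumes "0 < t"
  shows "pmf (poisson_pmf t) (Suc n) = t / (1 + real n) * pmf (poisson_pmf t) n"
  using assms by (simp add: field_simps)

lemma poisson_pmf_sums_1:
  assumes "0 < t"
  shows "(\<lambda>n. pmf (poisson_pmf t) n) sums 1"
proof -
  have "(\<lambda>n. t ^ n / fact n) sums exp t"
    using exp_converges[of t] by (simp add: divide_inverse scaleR_conv_of_real mult.commute)
  then have "(\<lambda>n. t ^ n / fact n * exp (-t)) sums (exp t * exp (-t))"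
    by (rule sums_mult2)
  then show ?thesis
    using assms by (simp add: mult_exp_exp)
qed

lemma poisson_pmf_mean_sums:
  assumes "0 < t"
  shows "(\<lambda>n. pmf (poisson_pmf t) n * real n) sums t"
proof -
  have "(\<lambda>n. t * pmf (poisson_pmf t) n) sums (t * 1)"
    using poisson_pmf_sums_1[OF assms] by (rule sums_mult)
  moreover have "(\<lambda>n. pmf (poisson_pmf t) (Suc n) * real (Suc n)) = (\<lambda>n. t * pmf (poisson_pmf t) n)"
    by (simp add: pmf_poisson_Suc[OF assms] del: pmf_poisson)
  ultimately have "(\<lambda>n. pmf (poisson_pmf t) (Suc n) * real (Suc n)) sums t"
    by simp
  then show ?thesis
    by (subst (asm) sums_Suc_iff) simp
qed

lemma poisson_pmf_inverse_Suc_sums: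
  assumes "0 < t"
  shows "(\<lambda>n. pmf (poisson_pmf t) n / (1 + real n)) sums ((1 - exp (-t)) / t)"
proof -
  have "(\<lambda>n. pmf (poisson_pmf t) (Suc n)) sums (1 - pmf (poisson_pmf t) 0)"
    using poisson_pmf_sums_1[OF assms] by (subst sums_Suc_iff) simp
  then have "(\<lambda>n. pmf (poisson_pmf t) (Suc n) / t) sums ((1 - exp (-t)) / t)"
    using assms by (intro sums_divide) simp
  then show ?thesis
    using assms by (simp add: pmf_poisson_Suc[OF assms] del: pmf_poisson)
qed

lemma le_tangent_if_deriv_antimono:
  fixes f f' :: "real \<Rightarrow> real"
  assumes deriv: "\<And>y. l \<le> y \<Longrightarrow> (f has_real_derivative f' y) (at y)"
    and antimono: "\<And>y z. l \<le> y \<Longrightarrow> y \<le> z \<Longrightarrow> f' z \<le> f' y"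
    and "l \<le> a" "l \<le> x"
  shows "f x \<le> f a + f' a * (x - a)"
proof -
  consider "x = a" | "a < x" | "x < a" by linarith
  then show ?thesis
  proof cases
    case 1
    then show ?thesis by simp
  next
    case 2
    then obtain z where "a < z" "f x - f a = (x - a) * f' z"
      using MVT2[of a x f f'] deriv \<open>l \<le> a\<close> by force
    moreover have "(x - a) * f' z \<le> (x - a) * f' a"
      using antimono \<open>l \<le> a\<close> \<open>a < z\<close> 2 by (simp add: mult_left_mono)
    ultimately show ?thesis
      by (simp add: algebra_simps)
  next
    case 3
    then obtain z where "x < z" "z < a" "f a - f x = (a - x) * f' z"
      using MVT2[of x a f f'] deriv \<open>l \<le> x\<close> by force
    moreover have "(a - x) * f' a \<le> (a - x) * f' z"
      using antimono \<open>l \<le> x\<close> \<open>x < z\<close> \<open>z < a\<close> 3 by (simp add: mult_left_mono)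
    ultimately show ?thesis
      by (simp add: algebra_simps)
  qed
qed

lemma ln_sq_le_tangent:
  fixes a x :: real
  assumes "exp 1 \<le> a" "exp 1 \<le> x"
  shows "(ln x)\<^sup>2 \<le> (ln a)\<^sup>2 + 2 * ln a / a * (x - a)"
proof (rule le_tangent_if_deriv_antimono[where l = "exp 1"])
  fix y :: real
  assume "exp 1 \<le> y"
  then have "0 < y"
    using exp_gt_zero[of 1] by linarith
  then show "((\<lambda>y. (ln y)\<^sup>2) has_real_derivative 2 * ln y / y) (at y)"
    by (auto intro!: derivative_eq_intros)
next
  fix y z :: real
  assume "exp 1 \<le> y" "y \<le> z"
  then show "2 * ln z / z \<le> 2 * ln y / y"
    using ln_x_over_x_mono by fastforce
qed (use assms in auto)

lemma two_ln_le_diff_inverse: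
  fixes x :: real
  assumes "1 \<le> x"
  shows "2 * ln x \<le> x - 1 / x"
proof -
  have "(\<lambda>y. y - 1 / y - 2 * ln y) 1 \<le> (\<lambda>y. y - 1 / y - 2 * ln y) x"
  proof (rule DERIV_nonneg_imp_nondecreasing[OF assms])
    fix y :: real
    assume "1 \<le> y"
    then have "((\<lambda>y. y - 1 / y - 2 * ln y) has_real_derivative 1 + 1 / y\<^sup>2 - 2 / y) (at y)"
      by (auto intro!: derivative_eq_intros simp: power2_eq_square)
    moreover have "1 + 1 / y\<^sup>2 - 2 / y = (1 - 1 / y)\<^sup>2"
      by (simp add: power2_eq_square algebra_simps)
    ultimately show "\<exists>d. ((\<lambda>y. y - 1 / y - 2 * ln y) has_real_derivative d) (at y) \<and> 0 \<le> d"
      by (metis zero_le_power2)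
  qed
  then show ?thesis
    by simp
qed

lemma log_plus_sq_le:
  fixes u :: real
  assumes "0 < u"
  shows "(log_plus u)\<^sup>2 \<le> u - 2 + 1 / u"
proof (cases "1 \<le> u")
  case False
  then have "log_plus u = 0"
    using assms unfolding log_plus_def by simp
  moreover have "u - 2 + 1 / u = (u - 1)\<^sup>2 / u"
    using assms by (simp add: power2_eq_square field_simps)
  ultimately show ?thesis
    using assms by simp
next
  case True
  have "0 \<le> ln u"
    using True by simp
  moreover have "ln u \<le> sqrt u - 1 / sqrt u"
    using two_ln_le_diff_inverse[of "sqrt u"] True assms by (simp add: ln_sqrt)
  ultimately have "(ln u)\<^sup>2 \<le> (sqrt u - 1 / sqrt u)\<^sup>2"
    by (simp add: power_mono)
  also have "\<dots> = u - 2 + 1 / u"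
    using assms by (simp add: power2_eq_square field_simps)
  finally show ?thesis
    using \<open>0 \<le> ln u\<close> unfolding log_plus_def by simp
qed

lemma U_fun_le_of_majorant:
  assumes t: "0 < t"
    and majorant: "\<And>n. (log_plus ((1 + real n) / t))\<^sup>2
      \<le> \<alpha> + \<beta> * ((1 + real n) / t) + \<gamma> / ((1 + real n) / t)"
  shows "U_fun t \<le> 2 * t * (\<alpha> + \<beta> * (1 + 1 / t) + \<gamma> * (1 - exp (-t)))"
proof -
  let ?p = "poisson_pmf t"
  define g where "g n = \<alpha> + \<beta> * ((1 + real n) / t) + \<gamma> / ((1 + real n) / t)" for n
  have g_expand: "(\<alpha> + \<beta> / t) * q + \<beta> / t * (q * real n) + \<gamma> * t * (q / (1 + real n)) = q * g n"
    for q :: real and n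
    unfolding g_def using t by (simp add: field_simps)
  have "(\<lambda>n. (\<alpha> + \<beta> / t) * pmf ?p n + \<beta> / t * (pmf ?p n * real n) + \<gamma> * t * (pmf ?p n / (1 + real n)))
      sums ((\<alpha> + \<beta> / t) * 1 + \<beta> / t * t + \<gamma> * t * ((1 - exp (-t)) / t))"
    using poisson_pmf_sums_1[OF t] poisson_pmf_mean_sums[OF t] poisson_pmf_inverse_Suc_sums[OF t]
    by (intro sums_add sums_mult)
  then have "(\<lambda>n. pmf ?p n * g n) sums ((\<alpha> + \<beta> / t) * 1 + \<beta> / t * t + \<gamma> * t * ((1 - exp (-t)) / t))"
    by (simp only: g_expand)
  also have "(\<alpha> + \<beta> / t) * 1 + \<beta> / t * t + \<gamma> * t * ((1 - exp (-t)) / t)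
      = \<alpha> + \<beta> * (1 + 1 / t) + \<gamma> * (1 - exp (-t))"
    using t by (simp add: field_simps)
  finally have "measure_pmf.expectation ?p (\<lambda>n. (log_plus ((1 + real n) / t))\<^sup>2)
      \<le> \<alpha> + \<beta> * (1 + 1 / t) + \<gamma> * (1 - exp (-t))"
    by (rule expectation_nat_pmf_le_sums)
      (use majorant in \<open>auto simp: g_def intro: order_trans[OF zero_le_power2]\<close>)
  then show ?thesis
    using t unfolding U_fun_def by simp
qed

lemma U_fun_le_2:
  assumes "0 \<le> t"
  shows "U_fun t \<le> 2"
proof (cases "t = 0")
  case True
  then show ?thesis
    by (simp add: U_fun_def)
next
  case False
  with assms have t: "0 < t"
    by simp
  have "(log_plus ((1 + real n) / t))\<^sup>2 \<le> -2 + 1 * ((1 + real n) / t) + 1 / ((1 + real n) / t)" for n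
    using log_plus_sq_le[of "(1 + real n) / t"] t by simp
  then have "U_fun t \<le> 2 * t * (-2 + 1 * (1 + 1 / t) + 1 * (1 - exp (-t)))"
    by (rule U_fun_le_of_majorant[OF t])
  also have "\<dots> = 2 - 2 * t * exp (-t)"
    using t by (simp add: algebra_simps)
  also have "\<dots> \<le> 2"
    using t by simp
  finally show ?thesis .
qed

lemma U_fun_le_tangent_bound:
  assumes t: "0 < t" "t \<le> exp (-1)"
  shows "U_fun t \<le> 2 * t * (ln (1 + 1 / t))\<^sup>2"
proof -
  define a where "a = 1 + 1 / t"
  define c where "c = 2 * ln a / a"
  have e_le: "exp 1 \<le> (1 + real n) / t" for n
  proof -
    have "exp 1 \<le> 1 / t"
      using t by (simp add: exp_minus field_simps)
    also have "\<dots> \<le> (1 + real n) / t"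
      using t by (simp add: divide_right_mono)
    finally show ?thesis .
  qed
  have "exp 1 \<le> a"
    using e_le[of 0] unfolding a_def by simp
  have "(log_plus ((1 + real n) / t))\<^sup>2 \<le> ((ln a)\<^sup>2 - c * a) + c * ((1 + real n) / t) + 0 / ((1 + real n) / t)" for n
  proof -
    have "1 \<le> (1 + real n) / t"
      using e_le[of n] one_le_exp_iff[of 1] by linarith
    then have "log_plus ((1 + real n) / t) = ln ((1 + real n) / t)"
      unfolding log_plus_def by simp
    then show ?thesis
      using ln_sq_le_tangent[OF \<open>exp 1 \<le> a\<close> e_le[of n]] unfolding c_def by (simp add: right_diff_distrib)
  qed
  then have "U_fun t \<le> 2 * t * (((ln a)\<^sup>2 - c * a) + c * (1 + 1 / t) + 0 * (1 - exp (-t)))"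
    by (rule U_fun_le_of_majorant[OF t(1)])
  then show ?thesis
    unfolding a_def by simp
qed

lemma tangent_bound_le_V_fun:
  assumes "0 < t"
  shows "2 * t * (ln (1 + 1 / t))\<^sup>2 \<le> 8 * V_fun t"
proof -
  define s where "s = 1 / sqrt t"
  have "0 < s"
    using assms by (simp add: s_def)
  have "1 + 1 / t = 1 + s\<^sup>2"
    using assms by (simp add: s_def power_divide)
  also have "\<dots> \<le> (1 + s)\<^sup>2"
    using \<open>0 < s\<close> by (simp add: power2_eq_square algebra_simps)
  finally have "ln (1 + 1 / t) \<le> ln ((1 + s)\<^sup>2)"
    by (rule ln_mono) (use assms in \<open>simp add: add_pos_pos\<close>)
  also have "\<dots> = 2 * ln (1 + s)"
    using \<open>0 < s\<close> by (simp add: ln_realpow)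
  finally have "(ln (1 + 1 / t))\<^sup>2 \<le> (2 * ln (1 + s))\<^sup>2"
    using assms by (intro power_mono) simp_all
  then show ?thesis
    using assms unfolding V_fun_def s_def by (simp add: power_mult_distrib)
qed

lemma V_fun_ge_one_ninth:
  assumes "1 / 4 \<le> t"
  shows "1 / 9 \<le> V_fun t"
proof -
  define s where "s = 1 / sqrt t"
  have t: "0 < t"
    using assms by simp
  have "0 < s"
    using t by (simp add: s_def)
  have "sqrt (1 / 4) \<le> sqrt t"
    using assms by (rule real_sqrt_le_mono)
  then have "s \<le> 2"
    using t by (simp add: s_def real_sqrt_divide field_simps)
  have "ln (1 / (1 + s)) \<le> 1 / (1 + s) - 1"
    using \<open>0 < s\<close> by (intro ln_le_minus_one) simp
  then have "s / (1 + s) \<le> ln (1 + s)"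
    using \<open>0 < s\<close> by (simp add: ln_div field_simps)
  then have "t * (s / (1 + s))\<^sup>2 \<le> t * (ln (1 + s))\<^sup>2"
    using t \<open>0 < s\<close> by (intro mult_left_mono power_mono) simp_all
  moreover have "t * (s / (1 + s))\<^sup>2 = 1 / (1 + s)\<^sup>2"
  proof -
    have "t * s\<^sup>2 = 1"
      using t by (simp add: s_def power_divide)
    then show ?thesis
      by (simp add: power_divide)
  qed
  moreover have "1 / 9 \<le> 1 / (1 + s)\<^sup>2"
  proof -
    have "(1 + s)\<^sup>2 \<le> 3\<^sup>2"
      using \<open>0 < s\<close> \<open>s \<le> 2\<close> by (intro power_mono) simp_all
    then show ?thesis
      using \<open>0 < s\<close> by (simp add: field_simps)
  qed
  ultimately show ?thesis
    unfolding V_fun_def s_def by simp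
qed

lemma U_fun_le_V_fun:
  assumes "0 \<le> t"
  shows "U_fun t \<le> 21.5 * V_fun t"
proof -
  consider "t = 0" | "0 < t" "t \<le> exp (-1)" | "exp (-1) < t"
    using assms by linarith
  then show ?thesis
  proof cases
    case 1
    then show ?thesis
      by (simp add: U_fun_def V_fun_def)
  next
    case 2
    have "0 \<le> V_fun t"
      using 2 unfolding V_fun_def by simp
    then show ?thesis
      using U_fun_le_tangent_bound[OF 2] tangent_bound_le_V_fun[OF 2(1)] by linarith
  next
    case 3
    have "1 / 4 \<le> exp (-1 :: real)"
      using exp_le by (simp add: exp_minus field_simps)
    then have "1 / 9 \<le> V_fun t"
      using 3 by (intro V_fun_ge_one_ninth) linarith
    then show ?thesis
      using U_fun_le_2[OF assms] by linarith
  qed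
qed

theorem lemma4:
  shows "(\<forall>t>0. U_fun t \<le> 2 + 2 / t)
    \<and> (\<forall>t. 0 < t \<and> t \<le> exp (-1) \<longrightarrow> U_fun t \<le> 2 * t * (ln (1 + 1 / t))\<^sup>2)
    \<and> (\<forall>t\<ge>0. U_fun t \<le> 8)
    \<and> (\<forall>t\<ge>0. U_fun t \<le> 21.5 * V_fun t)"
proof (intro conjI allI impI)
  fix t :: real
  assume "0 < t"
  then show "U_fun t \<le> 2 + 2 / t"
    using U_fun_le_2[of t] by (simp add: add_increasing2)
next
  fix t :: real
  assume "0 < t \<and> t \<le> exp (-1)"
  then show "U_fun t \<le> 2 * t * (ln (1 + 1 / t))\<^sup>2"
    by (intro U_fun_le_tangent_bound) simp_all
next
  fix t :: real
  assume "0 \<le> t"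
  then show "U_fun t \<le> 8"
    using U_fun_le_2[of t] by simp
next
  fix t :: real
  assume "0 \<le> t"
  then show "U_fun t \<le> 21.5 * V_fun t"
    by (rule U_fun_le_V_fun)
qed

end
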